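(* Let $n = 3^{n_1}\cdot 4^{n_2}\cdot 5^{n_3}\cdot 7^{n_4}\cdot 8^{n_5}\cdot 11^{n_6}\cdot 23^{n_7}$, where $n_1,\dots,n_7$ are nonnegative integers. Then there exists a quasigroup $(Q,\cdot)$ with $|Q| = n$ satisfying the identity $x\cdot(y\cdot(y\cdot x)) = y$ for all $x,y\in Q$.
   Context: A quasigroup is a set $Q$ with a binary operation $\cdot$ such that for all $a,b\in Q$ each of the equations $a\cdot x = b$ and $y\cdot a = b$ has a unique solution $x\in Q$, resp. $y\in Q$. *)

theory Defs
  imports Main
begin

definition quasigroup :: "'a set \<Rightarrow> ('a \<Rightarrow> 'a \<Rightarrow> 'a) \<Rightarrow> bool" where
  "quasigroup Q op \<longleftrightarrow>
     (\<forall>a\<in>Q. \<forall>b\<in>Q. op a b \<in> Q) \<and>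
     (\<forall>a\<in>Q. \<forall>b\<in>Q. \<exists>!x. x \<in> Q \<and> op a x = b) \<and>
     (\<forall>a\<in>Q. \<forall>b\<in>Q. \<exists>!y. y \<in> Q \<and> op y a = b)"

end

theory Submission
  imports Defs "HOL-Number_Theory.Cong"
begin

text \<open>Orders of quasigroups satisfying x(y(yx)) = y are closed under multiplication, since
the law passes to direct products. A prime p is realised by x \<cdot> y = ax + by on \<int>/p, which
satisfies the law as soon as a + b^3 \<equiv> 0 and ab(b + 1) \<equiv> 1 (mod p); the orders 4 and 8
come from the analogous linear quasigroups on (\<int>/2)^2 and (\<int>/2)^3.\<close>

definition xyyx_law :: "'a set \<Rightarrow> ('a \<Rightarrow> 'a \<Rightarrow> 'a) \<Rightarrow> bool" where
  "xyyx_law Q op \<longleftrightarrow> (\<forall>x\<in>Q. \<forall>y\<in>Q. op x (op y (op y x)) = y)"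

definition xyyx_spectrum :: "nat set" where
  "xyyx_spectrum = {card Q | (Q :: nat set) op. finite Q \<and> quasigroup Q op \<and> xyyx_law Q op}"

lemma bij_betw_self_iff_ex1:
  "bij_betw f A A \<longleftrightarrow> (\<forall>x\<in>A. f x \<in> A) \<and> (\<forall>b\<in>A. \<exists>!x. x \<in> A \<and> f x = b)"
proof
  assume "bij_betw f A A"
  then have inj: "inj_on f A" and im: "f ` A = A" by (simp_all add: bij_betw_def)
  show "(\<forall>x\<in>A. f x \<in> A) \<and> (\<forall>b\<in>A. \<exists>!x. x \<in> A \<and> f x = b)"
  proof (intro conjI ballI)
    show "f x \<in> A" if "x \<in> A" for x using im that by blast
    fix b assume "b \<in> A"
    then obtain x where "x \<in> A" "f x = b" using im by (metis imageE)
    with inj show "\<exists>!x. x \<in> A \<and> f x = b" by (auto dest: inj_onD)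
  qed
next
  assume *: "(\<forall>x\<in>A. f x \<in> A) \<and> (\<forall>b\<in>A. \<exists>!x. x \<in> A \<and> f x = b)"
  then have "inj_on f A" by (intro inj_onI) blast
  moreover have "f ` A = A" using * by blast
  ultimately show "bij_betw f A A" by (simp add: bij_betw_def)
qed

lemma quasigroup_iff_bij_betw_translations:
  "quasigroup Q op \<longleftrightarrow> (\<forall>a\<in>Q. bij_betw (op a) Q Q \<and> bij_betw (\<lambda>y. op y a) Q Q)"
proof -
  have closed_swap: "(\<forall>a\<in>Q. \<forall>x\<in>Q. op x a \<in> Q) \<longleftrightarrow> (\<forall>a\<in>Q. \<forall>b\<in>Q. op a b \<in> Q)" by blast
  show ?thesis
    unfolding quasigroup_def bij_betw_self_iff_ex1 ball_conj_distrib closed_swap by argo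
qed

lemma quasigroup_finiteI:
  assumes "finite Q" and "\<And>a b. a \<in> Q \<Longrightarrow> b \<in> Q \<Longrightarrow> op a b \<in> Q"
    and "\<And>a. a \<in> Q \<Longrightarrow> inj_on (op a) Q" and "\<And>a. a \<in> Q \<Longrightarrow> inj_on (\<lambda>y. op y a) Q"
  shows "quasigroup Q op"
  unfolding quasigroup_iff_bij_betw_translations bij_betw_def
  using assms endo_inj_surj[OF \<open>finite Q\<close>] by (metis image_subsetI)

definition prod_op :: "('a \<Rightarrow> 'a \<Rightarrow> 'a) \<Rightarrow> ('b \<Rightarrow> 'b \<Rightarrow> 'b) \<Rightarrow> 'a \<times> 'b \<Rightarrow> 'a \<times> 'b \<Rightarrow> 'a \<times> 'b" where
  "prod_op f g p q = (f (fst p) (fst q), g (snd p) (snd q))"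

lemma prod_op_translations:
  "prod_op f g (a, b) = map_prod (f a) (g b)"
  "(\<lambda>p. prod_op f g p (a, b)) = map_prod (\<lambda>x. f x a) (\<lambda>y. g y b)"
  by (auto simp: prod_op_def)

lemma quasigroup_prod:
  assumes "quasigroup A f" and "quasigroup B g"
  shows "quasigroup (A \<times> B) (prod_op f g)"
  using assms unfolding quasigroup_iff_bij_betw_translations
  by (auto simp: prod_op_translations intro!: bij_betw_map_prod)

lemma xyyx_law_prod:
  assumes "xyyx_law A f" and "xyyx_law B g"
  shows "xyyx_law (A \<times> B) (prod_op f g)"
  using assms by (auto simp: xyyx_law_def prod_op_def)

lemma
  fixes f :: "'a \<Rightarrow> 'a \<Rightarrow> 'a" and h :: "'a \<Rightarrow> 'b"
  assumes h: "bij_betw h A B" and qg: "quasigroup A f"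
  defines "g \<equiv> inv_into A h"
  defines "op' \<equiv> \<lambda>u v. h (f (g u) (g v))"
  shows quasigroup_transfer: "quasigroup B op'"
    and xyyx_law_transfer: "xyyx_law A f \<Longrightarrow> xyyx_law B op'"
proof -
  have g: "bij_betw g B A" unfolding g_def using h by (rule bij_betw_inv_into)
  show "quasigroup B op'" unfolding quasigroup_iff_bij_betw_translations
  proof (intro ballI conjI)
    fix u assume "u \<in> B"
    then have "g u \<in> A" using g bij_betwE by blast
    then have "bij_betw (f (g u)) A A" "bij_betw (\<lambda>y. f y (g u)) A A"
      using qg unfolding quasigroup_iff_bij_betw_translations by blast+
    then have "bij_betw (h \<circ> f (g u) \<circ> g) B B" "bij_betw (h \<circ> (\<lambda>y. f y (g u)) \<circ> g) B B"
      using g h by (blast intro: bij_betw_trans)+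
    then show "bij_betw (op' u) B B" "bij_betw (\<lambda>v. op' v u) B B"
      by (simp_all add: op'_def comp_def)
  qed
  have f_closed: "f a b \<in> A" if "a \<in> A" "b \<in> A" for a b
    using qg that unfolding quasigroup_def by blast
  have g_h: "g (h x) = x" if "x \<in> A" for x
    unfolding g_def using h that by (rule bij_betw_inv_into_left)
  assume law: "xyyx_law A f"
  show "xyyx_law B op'" unfolding xyyx_law_def
  proof (intro ballI)
    fix x y assume "x \<in> B" "y \<in> B"
    then have x: "g x \<in> A" and y: "g y \<in> A" using g bij_betwE by blast+
    have "op' x (op' y (op' y x)) = h (f (g x) (f (g y) (f (g y) (g x))))"
      unfolding op'_def using x y by (simp add: f_closed g_h)
    also have "\<dots> = h (g y)" using law x y unfolding xyyx_law_def by simp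
    also have "\<dots> = y" unfolding g_def using h \<open>y \<in> B\<close> by (rule bij_betw_inv_into_right)
    finally show "op' x (op' y (op' y x)) = y" .
  qed
qed

lemma card_in_xyyx_spectrum:
  assumes "finite Q" and "quasigroup Q op" and "xyyx_law Q op"
  shows "card Q \<in> xyyx_spectrum"
proof -
  obtain h where h: "bij_betw h Q {0..<card Q}"
    using ex_bij_betw_finite_nat[OF \<open>finite Q\<close>] by blast
  let ?op = "\<lambda>u v. h (op (inv_into Q h u) (inv_into Q h v))"
  have "card {0..<card Q} \<in> xyyx_spectrum"
    unfolding xyyx_spectrum_def mem_Collect_eq
  proof (intro exI conjI)
    show "quasigroup {0..<card Q} ?op" using h assms(2) by (rule quasigroup_transfer)
    show "xyyx_law {0..<card Q} ?op" using h assms(2,3) by (rule xyyx_law_transfer)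
  qed simp_all
  then show ?thesis by simp
qed

lemma one_in_xyyx_spectrum: "1 \<in> xyyx_spectrum"
proof -
  have "card {()} \<in> xyyx_spectrum"
    by (rule card_in_xyyx_spectrum) (auto simp: quasigroup_def xyyx_law_def)
  then show ?thesis by simp
qed

lemma mult_in_xyyx_spectrum:
  assumes "m \<in> xyyx_spectrum" and "n \<in> xyyx_spectrum"
  shows "m * n \<in> xyyx_spectrum"
proof -
  obtain A :: "nat set" and f and B :: "nat set" and g
    where "m = card A" "finite A" "quasigroup A f" "xyyx_law A f"
      and "n = card B" "finite B" "quasigroup B g" "xyyx_law B g"
    using assms unfolding xyyx_spectrum_def by blast
  then have "card (A \<times> B) \<in> xyyx_spectrum"
    by (intro card_in_xyyx_spectrum[of _ "prod_op f g"] quasigroup_prod xyyx_law_prod) simp_all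
  with \<open>m = card A\<close> \<open>n = card B\<close> show ?thesis by (simp add: card_cartesian_product)
qed

lemma power_in_xyyx_spectrum: "n \<in> xyyx_spectrum \<Longrightarrow> n ^ k \<in> xyyx_spectrum"
  by (induction k) (simp_all add: one_in_xyyx_spectrum[simplified] mult_in_xyyx_spectrum)

lemma linear_mod_in_xyyx_spectrum:
  fixes m a b :: nat
  assumes "m > 0" and a: "[a + b ^ 3 = 0] (mod m)" and ab: "[a * b * (b + 1) = 1] (mod m)"
  shows "m \<in> xyyx_spectrum"
proof -
  define op where "op x y = (a * x + b * y) mod m" for x y
  have "[a * (b * (b + 1)) = Suc 0] (mod m)" "[b * (a * (b + 1)) = Suc 0] (mod m)"
    using ab by (simp_all only: mult.assoc mult.left_commute[of b a] One_nat_def)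
  then have "coprime a m" "coprime b m" unfolding coprime_iff_invertible_nat by blast+
  have unique: "y = z" if "[c * y = c * z] (mod m)" "coprime c m" "y < m" "z < m" for c y z
    using that by (simp add: cong_mult_lcancel_nat cong_less_modulus_unique_nat)
  have "quasigroup {..<m} op"
  proof (rule quasigroup_finiteI)
    show "op x y \<in> {..<m}" for x y using \<open>m > 0\<close> by (simp add: op_def)
    show "inj_on (op x) {..<m}" for x
    proof (rule inj_onI)
      fix y z assume "y \<in> {..<m}" "z \<in> {..<m}" "op x y = op x z"
      then have "[a * x + b * y = a * x + b * z] (mod m)" by (simp add: op_def cong_def)
      then have "[b * y = b * z] (mod m)" by (simp add: cong_add_lcancel_nat)
      with \<open>coprime b m\<close> \<open>y \<in> {..<m}\<close> \<open>z \<in> {..<m}\<close> show "y = z" by (metis unique lessThan_iff)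
    qed
    show "inj_on (\<lambda>y. op y x) {..<m}" for x
    proof (rule inj_onI)
      fix y z assume "y \<in> {..<m}" "z \<in> {..<m}" "op y x = op z x"
      then have "[a * y + b * x = a * z + b * x] (mod m)" by (simp add: op_def cong_def)
      then have "[a * y = a * z] (mod m)" by (simp add: cong_add_rcancel_nat)
      with \<open>coprime a m\<close> \<open>y \<in> {..<m}\<close> \<open>z \<in> {..<m}\<close> show "y = z" by (metis unique lessThan_iff)
    qed
  qed simp
  moreover have "xyyx_law {..<m} op" unfolding xyyx_law_def
  proof (intro ballI)
    fix x y assume "y \<in> {..<m}"
    have reduce: "(a * u + b * (t mod m)) mod m = (a * u + b * t) mod m" for u t
      by (metis mod_add_right_eq mod_mult_right_eq)
    have "op x (op y (op y x)) = (a * x + b * (a * y + b * (a * y + b * x))) mod m"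
      by (simp add: op_def reduce)
    also have "a * x + b * (a * y + b * (a * y + b * x)) = (a + b ^ 3) * x + a * b * (b + 1) * y"
      by (simp add: algebra_simps power3_eq_cube)
    finally have "op x (op y (op y x)) = ((a + b ^ 3) * x + a * b * (b + 1) * y) mod m" .
    moreover have "[(a + b ^ 3) * x + a * b * (b + 1) * y = 0 * x + 1 * y] (mod m)"
      using a ab by (intro cong_add cong_mult cong_refl)
    ultimately show "op x (op y (op y x)) = y" using \<open>y \<in> {..<m}\<close> by (simp add: cong_def)
  qed
  ultimately show ?thesis using card_in_xyyx_spectrum[of "{..<m}" op] by simp
qed

definition xyyx_table :: "nat \<Rightarrow> nat list list \<Rightarrow> bool" where
  "xyyx_table m T \<longleftrightarrow> length T = m \<and>
     (\<forall>r\<in>set T. length r = m \<and> distinct r \<and> set r \<subseteq> {..<m}) \<and>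
     (\<forall>c<m. distinct (map (\<lambda>r. r ! c) T)) \<and>
     (\<forall>x<m. \<forall>y<m. T ! x ! (T ! y ! (T ! y ! x)) = y)"

lemma table_in_xyyx_spectrum:
  assumes "xyyx_table m T"
  shows "m \<in> xyyx_spectrum"
proof -
  define op where "op x y = T ! x ! y" for x y
  have rows: "length (T ! x) = m" "distinct (T ! x)" "set (T ! x) \<subseteq> {..<m}" if "x < m" for x
    using assms that nth_mem unfolding xyyx_table_def by metis+
  have len: "length T = m" using assms unfolding xyyx_table_def by blast
  have cols: "distinct (map (\<lambda>r. r ! c) T)" if "c < m" for c
    using assms that unfolding xyyx_table_def by blast
  have "quasigroup {..<m} op"
  proof (rule quasigroup_finiteI)
    show "op x y \<in> {..<m}" if "x \<in> {..<m}" "y \<in> {..<m}" for x y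
      using rows[of x] that unfolding op_def by (auto dest: nth_mem)
    show "inj_on (op x) {..<m}" if "x \<in> {..<m}" for x
      using rows[of x] that unfolding op_def by (auto simp: inj_on_def distinct_conv_nth)
    show "inj_on (\<lambda>y. op y x) {..<m}" if "x \<in> {..<m}" for x
      using cols[of x] that len unfolding op_def by (auto simp: inj_on_def distinct_conv_nth)
  qed simp
  moreover have "xyyx_law {..<m} op"
    using assms unfolding xyyx_law_def xyyx_table_def op_def by simp
  ultimately show ?thesis using card_in_xyyx_spectrum[of "{..<m}" op] by simp
qed

lemma three_in_xyyx_spectrum: "3 \<in> xyyx_spectrum"
  by (rule linear_mod_in_xyyx_spectrum[where a = 2 and b = 1]) (simp_all add: cong_def)

lemma five_in_xyyx_spectrum: "5 \<in> xyyx_spectrum"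
  by (rule linear_mod_in_xyyx_spectrum[where a = 3 and b = 3]) (simp_all add: cong_def)

lemma seven_in_xyyx_spectrum: "7 \<in> xyyx_spectrum"
  by (rule linear_mod_in_xyyx_spectrum[where a = 6 and b = 2]) (simp_all add: cong_def)

lemma eleven_in_xyyx_spectrum: "11 \<in> xyyx_spectrum"
  by (rule linear_mod_in_xyyx_spectrum[where a = 7 and b = 5]) (simp_all add: cong_def)

lemma twenty_three_in_xyyx_spectrum: "23 \<in> xyyx_spectrum"
  by (rule linear_mod_in_xyyx_spectrum[where a = 11 and b = 13]) (simp_all add: cong_def)

text \<open>Cayley tables of x \<cdot> y = Ax + By on bit vectors under XOR; over \<int>/4 and \<int>/8 no linear
  operation satisfies the law, because ab(b + 1) is even for units a, b.\<close>

definition table4 :: "nat list list" where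
  "table4 = [[0,2,3,1],[1,3,2,0],[2,0,1,3],[3,1,0,2]]"

definition table8 :: "nat list list" where
  "table8 =
    [[0,2,4,6,3,1,7,5],[3,1,7,5,0,2,4,6],[6,4,2,0,5,7,1,3],[5,7,1,3,6,4,2,0],
     [7,5,3,1,4,6,0,2],[4,6,0,2,7,5,3,1],[1,3,5,7,2,0,6,4],[2,0,6,4,1,3,5,7]]"

lemma four_in_xyyx_spectrum: "4 \<in> xyyx_spectrum"
  by (rule table_in_xyyx_spectrum[of _ table4]) (unfold xyyx_table_def table4_def, code_simp)

lemma eight_in_xyyx_spectrum: "8 \<in> xyyx_spectrum"
  by (rule table_in_xyyx_spectrum[of _ table8]) (unfold xyyx_table_def table8_def, code_simp)

theorem mainTheorem1:
  fixes n1 n2 n3 n4 n5 n6 n7 n :: nat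
  assumes "n = 3^n1 * 4^n2 * 5^n3 * 7^n4 * 8^n5 * 11^n6 * 23^n7"
  shows "\<exists>(Q :: nat set) (op :: nat \<Rightarrow> nat \<Rightarrow> nat).
           finite Q \<and> card Q = n \<and> quasigroup Q op \<and>
           (\<forall>x\<in>Q. \<forall>y\<in>Q. op x (op y (op y x)) = y)"
proof -
  have "n \<in> xyyx_spectrum" unfolding assms
    by (intro mult_in_xyyx_spectrum power_in_xyyx_spectrum three_in_xyyx_spectrum
        four_in_xyyx_spectrum five_in_xyyx_spectrum seven_in_xyyx_spectrum
        eight_in_xyyx_spectrum eleven_in_xyyx_spectrum twenty_three_in_xyyx_spectrum)
  then obtain Q :: "nat set" and op where "card Q = n" "finite Q" "quasigroup Q op" "xyyx_law Q op"
    unfolding xyyx_spectrum_def by blast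
  then show ?thesis unfolding xyyx_law_def by blast
qed

end
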